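(* Let $\mathcal{Y}$ be a finite set of class labels and $T\ge 1$ an integer. Let $\mathbf{x}_T=\langle x_1,\ldots,x_T\rangle$ be a time series with true class $y\in\mathcal{Y}$, and for $1\le t\le T$ let $\mathbf{x}_t=\langle x_1,\ldots,x_t\rangle$ be its prefix of length $t$. For each $t\in\{1,\ldots,T\}$ let $h_t$ be a classifier mapping length-$t$ prefixes to $\mathcal{Y}$, and write $\hat{y}_t=h_t(\mathbf{x}_t)$. Let $\mathrm{C}_m:\mathcal{Y}\times\mathcal{Y}\to\mathbb{R}$ be a misclassification cost ($\mathrm{C}_m(\hat{y}\mid y)$ is the cost of predicting $\hat{y}$ when the true class is $y$), let $\mathrm{C}_d:\{1,\ldots,T\}\to\mathbb{R}$ be a delay cost, and let $\mathrm{C}_{cd}:\mathcal{Y}\times\mathcal{Y}\to\mathbb{R}$ be a cost of changing decision with $\mathrm{C}_{cd}(\hat{y}\mid\hat{y})=0$ for all $\hat{y}\in\mathcal{Y}$ and $\mathrm{C}_{cd}(\hat{y}\mid\hat{y}')>0$ for all $\hat{y}\neq\hat{y}'$ in $\mathcal{Y}$. A sequence of decisions is $\mathcal{D}_\ell=\langle \hat{y}_{t_1},\ldots,\hat{y}_{t_\ell}\rangle$ with $\ell\ge 1$, decision times $1\le t_1<t_2<\cdots<t_\ell\le T$ and $\hat{y}_{t_i}=h_{t_i}(\mathbf{x}_{t_i})$; let $\mathbb{D}_T$ denote the set of all such sequences. Its cost is $$g(\mathcal{D}_\ell\mid\mathbf{x}_T,y)=\mathrm{C}_m(\hat{y}_{t_\ell}\mid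 y)+\mathrm{C}_d(t_\ell)+\sum_{i=1}^{\ell-1}\mathrm{C}_{cd}(\hat{y}_{t_{i+1}}\mid\hat{y}_{t_i}).$$ Then an optimal sequence of decisions (a minimizer of $g(\cdot\mid\mathbf{x}_T,y)$ over $\mathbb{D}_T$) is given by a one-decision sequence $\langle \hat{y}_{t^\star}\rangle$, where $t^\star$ is any element of $$\operatorname*{ArgMin}_{1\le t\le T}\bigl\{\mathrm{C}_m(\hat{y}_t\mid y)+\mathrm{C}_d(t)\bigr\}.$$
   Context: Setting: early classification of time series in a revocable regime. A decision maker observing the time series up to time $t$ may output the prediction $h_t(\mathbf{x}_t)$ and may later change its prediction (each change from one label to a different label incurs the change-of-decision cost); the final cost is the misclassification cost of the last prediction, plus the delay cost at the time of the last prediction, plus the sum of the change-of-decision costs between consecutive predictions. The theorem considers a decision maker who knows the true class $y$ but can only output predictions produced by the classifiers $h_t$. *)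

theory Defs
  imports Complex_Main
begin

definition pred :: "(nat \<Rightarrow> 'x list \<Rightarrow> 'y) \<Rightarrow> 'x list \<Rightarrow> nat \<Rightarrow> 'y" where
  "pred h xs t = h t (take t xs)"

text \<open>Sequences of decisions, represented by their strictly increasing decision times
  t_1 < ... < t_l in {1..T}, l \<ge> 1; the decision at t_i is pred h xs t_i.\<close>
definition decision_seqs :: "nat \<Rightarrow> nat list set" where
  "decision_seqs T = {ts. ts \<noteq> [] \<and> sorted_wrt (<) ts \<and> (\<forall>t\<in>set ts. 1 \<le> t \<and> t \<le> T)}"

text \<open>Cost g of a decision sequence. Cm yhat y = C_m(yhat | y); Ccd new old = C_cd(new | old).\<close>
definition seq_cost ::
  "('y \<Rightarrow> 'y \<Rightarrow> real) \<Rightarrow> (nat \<Rightarrow> real) \<Rightarrow> ('y \<Rightarrow> 'y \<Rightarrow> real)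
   \<Rightarrow> (nat \<Rightarrow> 'x list \<Rightarrow> 'y) \<Rightarrow> 'x list \<Rightarrow> 'y \<Rightarrow> nat list \<Rightarrow> real" where
  "seq_cost Cm Cd Ccd h xs y ts =
     Cm (pred h xs (last ts)) y + Cd (last ts)
     + (\<Sum>i<length ts - 1. Ccd (pred h xs (ts ! (i+1))) (pred h xs (ts ! i)))"

definition argmin_times :: "nat \<Rightarrow> (nat \<Rightarrow> real) \<Rightarrow> nat set" where
  "argmin_times T f = {t. 1 \<le> t \<and> t \<le> T \<and> (\<forall>t'. 1 \<le> t' \<and> t' \<le> T \<longrightarrow> f t \<le> f t')}"

end

theory Submission
  imports Defs
begin

text \<open>Change-of-decision costs are nonnegative, so dropping all decisions but the last one
  never increases the cost of a sequence; what remains is misclassification plus delay cost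
  at a single time, which is minimised by any time in the argmin.\<close>

lemma singleton_mem_decision_seqs:
  assumes "1 \<le> t" and "t \<le> T"
  shows "[t] \<in> decision_seqs T"
  using assms unfolding decision_seqs_def by simp

lemma last_mem_decision_seqs_bounds:
  assumes "ts \<in> decision_seqs T"
  shows "1 \<le> last ts \<and> last ts \<le> T"
  using assms unfolding decision_seqs_def by auto

lemma argmin_times_le:
  assumes "t \<in> argmin_times T f" and "1 \<le> t'" and "t' \<le> T"
  shows "f t \<le> f t'"
  using assms unfolding argmin_times_def by blast

lemma argmin_times_bounds:
  assumes "t \<in> argmin_times T f"
  shows "1 \<le> t \<and> t \<le> T"
  using assms unfolding argmin_times_def by blast

lemma seq_cost_singleton:
  "seq_cost Cm Cd Ccd h xs y [t] = Cm (pred h xs t) y + Cd t"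
  unfolding seq_cost_def by simp

lemma seq_cost_ge_last_decision_cost:
  assumes "\<And>a b. Ccd a b \<ge> 0"
  shows "Cm (pred h xs (last ts)) y + Cd (last ts) \<le> seq_cost Cm Cd Ccd h xs y ts"
proof -
  have "0 \<le> (\<Sum>i<length ts - 1. Ccd (pred h xs (ts ! (i+1))) (pred h xs (ts ! i)))"
    by (intro sum_nonneg assms)
  then show ?thesis
    unfolding seq_cost_def by simp
qed

theorem theorem1:
  fixes T :: nat
    and xs :: "'x list"
    and y :: "'y::finite"
    and h :: "nat \<Rightarrow> 'x list \<Rightarrow> 'y"
    and Cm :: "'y \<Rightarrow> 'y \<Rightarrow> real"
    and Cd :: "nat \<Rightarrow> real"
    and Ccd :: "'y \<Rightarrow> 'y \<Rightarrow> real"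
    and tstar :: nat
  assumes "T \<ge> 1"
    and "length xs = T"
    and "\<And>a. Ccd a a = 0"
    and "\<And>a b. a \<noteq> b \<Longrightarrow> Ccd a b > 0"
    and "tstar \<in> argmin_times T (\<lambda>t. Cm (pred h xs t) y + Cd t)"
  shows "[tstar] \<in> decision_seqs T \<and>
         (\<forall>ts\<in>decision_seqs T. seq_cost Cm Cd Ccd h xs y [tstar] \<le> seq_cost Cm Cd Ccd h xs y ts)"
proof (intro conjI ballI)
  show "[tstar] \<in> decision_seqs T"
    using argmin_times_bounds [OF assms(5)] by (intro singleton_mem_decision_seqs) auto
next
  fix ts
  assume "ts \<in> decision_seqs T"
  then have "Cm (pred h xs tstar) y + Cd tstar \<le> Cm (pred h xs (last ts)) y + Cd (last ts)"
    using argmin_times_le [OF assms(5)] last_mem_decision_seqs_bounds by blast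
  also have "\<dots> \<le> seq_cost Cm Cd Ccd h xs y ts"
  proof (rule seq_cost_ge_last_decision_cost)
    show "Ccd a b \<ge> 0" for a b
      using assms(3,4) by (cases "a = b") (auto intro: less_imp_le)
  qed
  finally show "seq_cost Cm Cd Ccd h xs y [tstar] \<le> seq_cost Cm Cd Ccd h xs y ts"
    by (simp only: seq_cost_singleton)
qed

end
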